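(* Let $\sigma^2>0$, $\theta\in\mathbb R^d\setminus\{0\}$, $\gamma>0$ and $\mathcal X\subseteq\mathbb R^d$. For $x\in\mathcal X$ and $y\in\mathbb R$ define the $\gamma$-score of the normal linear regression model $$S_\gamma(x,y,\theta)=(2\pi\sigma^2)^{-\frac{\gamma}{2(\gamma+1)}}\exp\Big\{-\frac{\gamma}{2}\frac{(y-\theta^\top x)^2}{\sigma^2}\Big\}\frac{y-\theta^\top x}{\sigma}\,x,$$ and let $H_\theta=\{v\in\mathbb R^d:\theta^\top v=0\}$, with $d(v,H_\theta)$ the Euclidean distance from $v$ to $H_\theta$. Then for every fixed $y\in\mathbb R$, $\sup_{x\in\mathcal X}d(S_\gamma(x,y,\theta),H_\theta)<\infty$.
   Context: The model is the normal linear regression model $p(y|x,\theta,\sigma^2)=(2\pi\sigma^2)^{-1/2}\exp\{-(y-\theta^\top x)^2/(2\sigma^2)\}$ with known $\sigma^2$; $S_\gamma$ is the score of the minimum $\gamma$-divergence estimator. *)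

theory Defs
  imports "HOL-Analysis.Analysis"
begin

definition gamma_score :: "real \<Rightarrow> real \<Rightarrow> real ^ 'd \<Rightarrow> real \<Rightarrow> real ^ 'd \<Rightarrow> real ^ 'd" where
  "gamma_score sigma2 \<gamma> x y \<theta> =
     ((2 * pi * sigma2) powr (- \<gamma> / (2 * (\<gamma> + 1)))
      * exp (- (\<gamma> / 2) * (y - \<theta> \<bullet> x)\<^sup>2 / sigma2)
      * ((y - \<theta> \<bullet> x) / sqrt sigma2)) *\<^sub>R x"

definition hyperplane_orth :: "real ^ 'd \<Rightarrow> (real ^ 'd) set" where
  "hyperplane_orth \<theta> = {v. \<theta> \<bullet> v = 0}"

end

theory Submission
  imports Defs
begin

text \<open>The distance from \<open>S\<^sub>\<gamma>\<close> to \<open>H\<^sub>\<theta>\<close> is \<open>\<bar>\<theta>\<^sup>\<top>S\<^sub>\<gamma>\<bar> / \<parallel>\<theta>\<parallel>\<close>, and \<open>\<theta>\<^sup>\<top>S\<^sub>\<gamma>\<close> depends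
  on \<open>x\<close> only through the residual \<open>t = y - \<theta>\<^sup>\<top>x\<close>: since \<open>\<theta>\<^sup>\<top>x = y - t\<close>, it is a
  constant times \<open>exp(-\<gamma> t\<^sup>2 / (2\<sigma>\<^sup>2)) t (y - t)\<close>. The Gaussian factor dominates the
  quadratic \<open>t (y - t)\<close>, so this is bounded uniformly in \<open>t\<close>, hence in \<open>x\<close>.\<close>

lemma infdist_hyperplane_orth:
  fixes \<theta> v :: "real ^ 'd"
  assumes "\<theta> \<noteq> 0"
  shows "infdist v (hyperplane_orth \<theta>) = \<bar>\<theta> \<bullet> v\<bar> / norm \<theta>"
proof (rule antisym)
  have "\<theta> \<bullet> \<theta> \<noteq> 0" using assms by simp
  then have proj_in: "v - ((\<theta> \<bullet> v) / (\<theta> \<bullet> \<theta>)) *\<^sub>R \<theta> \<in> hyperplane_orth \<theta>"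
    unfolding hyperplane_orth_def by (simp add: inner_diff_right)
  have "dist v (v - ((\<theta> \<bullet> v) / (\<theta> \<bullet> \<theta>)) *\<^sub>R \<theta>) = \<bar>\<theta> \<bullet> v\<bar> / norm \<theta>"
    using assms by (simp add: dist_norm power2_norm_eq_inner[symmetric] power2_eq_square)
  with proj_in show "infdist v (hyperplane_orth \<theta>) \<le> \<bar>\<theta> \<bullet> v\<bar> / norm \<theta>"
    by (metis infdist_le)
next
  have "0 \<in> hyperplane_orth \<theta>" unfolding hyperplane_orth_def by simp
  then have "infdist v (hyperplane_orth \<theta>) = (INF w\<in>hyperplane_orth \<theta>. dist v w)"
    by (intro infdist_notempty) blast
  moreover have "\<bar>\<theta> \<bullet> v\<bar> / norm \<theta> \<le> dist v w" if "w \<in> hyperplane_orth \<theta>" for w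
  proof -
    have "\<bar>\<theta> \<bullet> v\<bar> = \<bar>\<theta> \<bullet> (v - w)\<bar>"
      using that unfolding hyperplane_orth_def by (simp add: inner_diff_right)
    also have "\<dots> \<le> norm \<theta> * dist v w" by (simp add: dist_norm Cauchy_Schwarz_ineq2)
    finally show ?thesis using assms by (simp add: divide_le_eq mult.commute)
  qed
  ultimately show "\<bar>\<theta> \<bullet> v\<bar> / norm \<theta> \<le> infdist v (hyperplane_orth \<theta>)"
    using \<open>0 \<in> hyperplane_orth \<theta>\<close> by (auto intro!: cINF_greatest)
qed

lemma square_mult_exp_neg_square_le:
  fixes a t :: real
  assumes "a > 0"
  shows "t\<^sup>2 * exp (- (a * t\<^sup>2)) \<le> 1 / a"
proof -
  have "a * t\<^sup>2 \<le> exp (a * t\<^sup>2)"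
    using exp_ge_add_one_self[of "a * t\<^sup>2"] by linarith
  then show ?thesis
    using assms by (simp add: exp_minus field_simps)
qed

lemma abs_mult_exp_neg_square_le:
  fixes a t :: real
  assumes "a > 0"
  shows "\<bar>t\<bar> * exp (- (a * t\<^sup>2)) \<le> 1 + 1 / a"
proof -
  have "0 \<le> (\<bar>t\<bar> - 1)\<^sup>2" by simp
  then have "\<bar>t\<bar> \<le> 1 + t\<^sup>2" by (simp add: power2_diff power2_abs)
  then have "\<bar>t\<bar> * exp (- (a * t\<^sup>2)) \<le> (1 + t\<^sup>2) * exp (- (a * t\<^sup>2))"
    by (rule mult_right_mono) simp
  also have "\<dots> = exp (- (a * t\<^sup>2)) + t\<^sup>2 * exp (- (a * t\<^sup>2))"
    by (simp add: distrib_right)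
  also have "\<dots> \<le> 1 + 1 / a"
    using assms square_mult_exp_neg_square_le[OF assms, of t] by (intro add_mono) auto
  finally show ?thesis .
qed

lemma exp_neg_square_mult_quadratic_le:
  fixes a t y :: real
  assumes "a > 0"
  shows "exp (- (a * t\<^sup>2)) * \<bar>t * (y - t)\<bar> \<le> \<bar>y\<bar> * (1 + 1 / a) + 1 / a"
proof -
  have "\<bar>t * (y - t)\<bar> \<le> \<bar>t\<bar> * (\<bar>y\<bar> + \<bar>t\<bar>)"
    unfolding abs_mult by (intro mult_left_mono abs_triangle_ineq4) simp
  also have "\<dots> = \<bar>y\<bar> * \<bar>t\<bar> + t\<^sup>2"
    by (simp add: algebra_simps power2_eq_square abs_mult_self_eq)
  finally have "exp (- (a * t\<^sup>2)) * \<bar>t * (y - t)\<bar>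
      \<le> exp (- (a * t\<^sup>2)) * (\<bar>y\<bar> * \<bar>t\<bar> + t\<^sup>2)"
    by (rule mult_left_mono) simp
  also have "\<dots> = \<bar>y\<bar> * (\<bar>t\<bar> * exp (- (a * t\<^sup>2))) + t\<^sup>2 * exp (- (a * t\<^sup>2))"
    by (simp add: algebra_simps)
  also have "\<dots> \<le> \<bar>y\<bar> * (1 + 1 / a) + 1 / a"
    using abs_mult_exp_neg_square_le[OF assms] square_mult_exp_neg_square_le[OF assms]
    by (intro add_mono mult_left_mono) auto
  finally show ?thesis .
qed

lemma inner_gamma_score:
  fixes \<theta> x :: "real ^ 'd"
  assumes "t = y - \<theta> \<bullet> x"
  shows "\<theta> \<bullet> gamma_score sigma2 \<gamma> x y \<theta>
    = (2 * pi * sigma2) powr (- \<gamma> / (2 * (\<gamma> + 1))) / sqrt sigma2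
      * (exp (- (\<gamma> / (2 * sigma2) * t\<^sup>2)) * (t * (y - t)))"
proof -
  have "\<theta> \<bullet> x = y - t" using assms by simp
  moreover have "- (\<gamma> / 2) * (y - \<theta> \<bullet> x)\<^sup>2 / sigma2 = - (\<gamma> / (2 * sigma2) * t\<^sup>2)"
    using assms by simp
  ultimately show ?thesis
    unfolding gamma_score_def using assms by (simp add: ac_simps)
qed

theorem mainTheorem6:
  fixes sigma2 \<gamma> :: real and \<theta> :: "real ^ 'd" and X :: "(real ^ 'd) set"
  assumes "sigma2 > 0" and "\<theta> \<noteq> 0" and "\<gamma> > 0"
  shows "\<forall>y::real. bdd_above
           ((\<lambda>x. infdist (gamma_score sigma2 \<gamma> x y \<theta>) (hyperplane_orth \<theta>)) ` X)"
proof
  fix y :: real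
  define c where "c = (2 * pi * sigma2) powr (- \<gamma> / (2 * (\<gamma> + 1))) / sqrt sigma2"
  define a where "a = \<gamma> / (2 * sigma2)"
  have "a > 0" "c \<ge> 0" "norm \<theta> > 0"
    using assms unfolding a_def c_def by auto
  have "infdist (gamma_score sigma2 \<gamma> x y \<theta>) (hyperplane_orth \<theta>)
      \<le> c * (\<bar>y\<bar> * (1 + 1 / a) + 1 / a) / norm \<theta>" for x
  proof -
    define t where "t = y - \<theta> \<bullet> x"
    have "infdist (gamma_score sigma2 \<gamma> x y \<theta>) (hyperplane_orth \<theta>)
        = c * (exp (- (a * t\<^sup>2)) * \<bar>t * (y - t)\<bar>) / norm \<theta>"
      using \<open>c \<ge> 0\<close> assms(1,2)
      by (simp add: infdist_hyperplane_orth inner_gamma_score[OF t_def] abs_mult a_def c_def)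
    also have "\<dots> \<le> c * (\<bar>y\<bar> * (1 + 1 / a) + 1 / a) / norm \<theta>"
      using \<open>c \<ge> 0\<close> \<open>norm \<theta> > 0\<close> exp_neg_square_mult_quadratic_le[OF \<open>a > 0\<close>]
      by (intro divide_right_mono mult_left_mono) auto
    finally show ?thesis .
  qed
  then show "bdd_above ((\<lambda>x. infdist (gamma_score sigma2 \<gamma> x y \<theta>) (hyperplane_orth \<theta>)) ` X)"
    by (intro bdd_aboveI2)
qed

end
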